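(* Consider two-value instances, i.e. instances in which every interval has length either $k/\Delta$ (short) or $k$ (long). Let $\textsc{Alg}$ be any deterministic online algorithm that receives the full prediction $\hat{\mathbf{I}}$. If there is $\epsilon>0$ such that for every two-value instance $\mathcal{I}$ and every prediction, $|\textsc{Opt}(\mathcal{I})| \le \Delta\cdot|\textsc{Alg}(\mathcal{I})| + \frac{k}{\Delta} - \epsilon$, then there is a two-value instance $\mathcal{I}$ whose prediction $\hat{\mathbf{I}}$ is accurate and on which $|\textsc{Opt}(\mathcal{I})| \ge \Delta\cdot|\textsc{Alg}(\mathcal{I})|$; that is, $\textsc{Alg}$ cannot be better than $\Delta$-consistent.
   Context: Online interval scheduling: intervals $I_j$ with release time $r_j$, deadline $d_j$, length $l_j=d_j-r_j$ arrive online in non-decreasing order of release time; each must be irrevocably accepted or rejected upon arrival; accepted intervals must be pairwise non-overlapping; objective: maximize the total accepted length $|\cdot|$. $\textsc{Opt}(\mathcal{I})$ is an optimal offline solution. $k=\max_j l_j$, $\Delta=k/\min_j l_j$. The full prediction $\hat{\mathbf{I}}=\{(\hat r_1,\hat d_1),\dots,(\hat r_n,\hat d_n)\}$ gives a predicted release time and deadline for every interval and is available to the algorithm in advance; it is accurate if it coincides with the actual instance. An algorithm is $\alpha$-consistent if $|\textsc{Opt}(\mathcal{I})|\le\alpha|\textsc{Alg}(\mathcal{I})|$ on all instances with accurate predictions. *)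

theory Defs
  imports Complex_Main
begin

text \<open>An interval is a pair (release time, deadline). Instances and predictions
are lists of intervals; instances are presented in order of release time.\<close>

type_synonym interval = "real \<times> real"

definition iv_len :: "interval \<Rightarrow> real" where
  "iv_len iv = snd iv - fst iv"

definition iv_disjoint :: "interval \<Rightarrow> interval \<Rightarrow> bool" where
  "iv_disjoint a b \<longleftrightarrow> snd a \<le> fst b \<or> snd b \<le> fst a"

definition feasible :: "interval list \<Rightarrow> nat set \<Rightarrow> bool" where
  "feasible I S \<longleftrightarrow> S \<subseteq> {..<length I} \<and>
     (\<forall>i\<in>S. \<forall>j\<in>S. i \<noteq> j \<longrightarrow> iv_disjoint (I ! i) (I ! j))"

definition opt_val :: "interval list \<Rightarrow> real" where
  "opt_val I = Max ((\<lambda>S. \<Sum>i\<in>S. iv_len (I ! i)) ` {S. feasible I S})"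

text \<open>A deterministic online algorithm with full prediction: given the prediction
and the prefix of the instance revealed so far (whose last element is the current
interval), it decides whether to accept the current interval. An acceptance of an
interval overlapping a previously accepted one is not executed (so the algorithm
is always feasible; equivalently, we range over all feasible algorithms).\<close>
type_synonym online_alg = "interval list \<Rightarrow> interval list \<Rightarrow> bool"

fun alg_acc :: "online_alg \<Rightarrow> interval list \<Rightarrow> interval list \<Rightarrow> nat \<Rightarrow> nat set" where
  "alg_acc A P I 0 = {}"
| "alg_acc A P I (Suc j) =
     (let S = alg_acc A P I j in
      if A P (take (Suc j) I) \<and> (\<forall>i\<in>S. iv_disjoint (I ! i) (I ! j))
      then insert j S else S)"

definition alg_val :: "online_alg \<Rightarrow> interval list \<Rightarrow> interval list \<Rightarrow> real" where
  "alg_val A P I = (\<Sum>i\<in>alg_acc A P I (length I). iv_len (I ! i))"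

definition two_value :: "real \<Rightarrow> real \<Rightarrow> interval list \<Rightarrow> bool" where
  "two_value k \<Delta> I \<longleftrightarrow> sorted (map fst I) \<and>
     (\<forall>iv\<in>set I. iv_len iv = k / \<Delta> \<or> iv_len iv = k)"

end

theory Submission
  imports Defs
begin

text \<open>Let \<open>s = k/\<Delta>\<close>. Any algorithm with additive robustness error below \<open>s\<close> must
accept a lone short interval \<open>[0, s]\<close> whatever the prediction, since rejecting it
yields 0 against an optimum of \<open>s\<close>. Now predict the instance consisting of this
short interval followed by a long interval \<open>[s/2, s/2 + k]\<close> overlapping it, and make
the prediction come true: the algorithm has already committed to the short interval
before it sees the long one, so it gains \<open>s\<close> while the optimum gains \<open>k = \<Delta> s\<close>.\<close>

lemma opt_val_ge_feasible:
  assumes "feasible I S"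
  shows "(\<Sum>i\<in>S. iv_len (I ! i)) \<le> opt_val I"
proof -
  have "{S. feasible I S} \<subseteq> Pow {..<length I}"
    by (auto simp: feasible_def)
  then have "finite {S. feasible I S}"
    by (rule finite_subset) simp
  then show ?thesis
    unfolding opt_val_def using assms by (intro Max_ge) auto
qed

lemma opt_val_ge_nth:
  assumes "i < length I"
  shows "iv_len (I ! i) \<le> opt_val I"
proof -
  have "feasible I {i}"
    using assms by (simp add: feasible_def)
  then show ?thesis
    using opt_val_ge_feasible by fastforce
qed

lemma alg_val_singleton:
  "alg_val A P [iv] = (if A P [iv] then iv_len iv else 0)"
  by (simp add: alg_val_def)

lemma alg_val_overlapping_pair:
  assumes "A P [a]" and "\<not> iv_disjoint a b"
  shows "alg_val A P [a, b] = iv_len a"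
  using assms by (simp add: alg_val_def numeral_2_eq_2 Let_def)

lemma robust_alg_accepts_singleton:
  fixes k \<Delta> \<epsilon> :: real and A :: online_alg
  assumes "k \<ge> 0" and "\<Delta> \<ge> 1" and "\<epsilon> > 0"
    and robust: "\<forall>I P. two_value k \<Delta> I \<longrightarrow> opt_val I \<le> \<Delta> * alg_val A P I + k / \<Delta> - \<epsilon>"
    and "two_value k \<Delta> [iv]"
  shows "A P [iv]"
proof (rule ccontr)
  assume "\<not> A P [iv]"
  then have "opt_val [iv] \<le> k / \<Delta> - \<epsilon>"
    using robust[rule_format, OF assms(5), of P] by (simp add: alg_val_singleton)
  moreover have "k / \<Delta> \<le> iv_len iv"
    using assms(1,2,5) by (auto simp: two_value_def divide_le_eq mult_le_cancel_left1)
  moreover have "iv_len iv \<le> opt_val [iv]"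
    using opt_val_ge_nth[of 0 "[iv]"] by simp
  ultimately show False
    using \<open>\<epsilon> > 0\<close> by linarith
qed

theorem mainTheorem4:
  fixes k \<Delta> :: real and A :: online_alg
  assumes "k > 0" and "\<Delta> \<ge> 1"
    and "\<exists>\<epsilon>>0. \<forall>I P. two_value k \<Delta> I \<longrightarrow>
            opt_val I \<le> \<Delta> * alg_val A P I + k / \<Delta> - \<epsilon>"
  shows "\<exists>I. two_value k \<Delta> I \<and> I \<noteq> [] \<and> opt_val I \<ge> \<Delta> * alg_val A I I"
proof -
  obtain \<epsilon> where "\<epsilon> > 0" and robust: "\<forall>I P. two_value k \<Delta> I \<longrightarrow>
      opt_val I \<le> \<Delta> * alg_val A P I + k / \<Delta> - \<epsilon>"
    using assms(3) by blast
  define s where "s = k / \<Delta>"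
  have "s > 0" and "\<Delta> * s = k"
    using assms(1,2) by (simp_all add: s_def)
  define short long :: interval where "short = (0, s)" and "long = (s / 2, s / 2 + k)"
  define I where "I = [short, long]"
  have two_value_I: "two_value k \<Delta> I" and "two_value k \<Delta> [short]"
    using \<open>s > 0\<close> by (auto simp: two_value_def iv_len_def I_def short_def long_def s_def)
  then have "A I [short]"
    using robust_alg_accepts_singleton[OF _ assms(2) \<open>\<epsilon> > 0\<close> robust] assms(1) by simp
  moreover have "\<not> iv_disjoint short long"
    using \<open>s > 0\<close> assms(1) by (simp add: iv_disjoint_def short_def long_def)
  ultimately have "\<Delta> * alg_val A I I = k"
    using \<open>\<Delta> * s = k\<close> by (simp add: I_def alg_val_overlapping_pair iv_len_def short_def)
  also have "k \<le> opt_val I"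
    using opt_val_ge_nth[of 1 I] by (simp add: I_def iv_len_def long_def)
  finally show ?thesis
    using two_value_I by (auto simp: I_def)
qed

end
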